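(* Let $c\in\mathbb{C}$ with $\operatorname{Re}(c)<-1$. Then $\overline{\sigma_c(\mathbb{N})}=\sigma_c(\mathbb{S})$, where the closure is taken in $\mathbb{C}$.
   Context: For $c\in\mathbb{C}$, $\sigma_c(n)=\sum_{d\mid n}d^c$ for $n\in\mathbb{N}$. A Steinitz (supernatural) number is a formal product $n=\prod_{p}p^{\alpha_p}$ over all primes with $\alpha_p\in\mathbb{Z}_{\ge0}\cup\{\infty\}$; $\mathbb{S}$ is the set of all Steinitz numbers. For $\operatorname{Re}(c)<-1$, $\sigma_c$ is extended to $\mathbb{S}$ multiplicatively: $\sigma_c(n)=\prod_p\sigma_c(p^{\alpha_p})$, with $\sigma_c(p^\alpha)=\sum_{i=0}^\alpha p^{ci}$ for finite $\alpha$ and $\sigma_c(p^\infty)=\lim_{k\to\infty}\sigma_c(p^k)=\frac{1}{1-p^c}$. *)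

theory Defs
  imports "HOL-Analysis.Analysis" "HOL-Computational_Algebra.Primes" "HOL-Library.Extended_Nat"
begin

definition sigma_nat :: "complex \<Rightarrow> nat \<Rightarrow> complex" where
  "sigma_nat c n = (\<Sum>d | d dvd n. (of_nat d) powr c)"

text \<open>Steinitz numbers: exponent functions on primes, values in N \<union> {\<infinity>};
  represented as functions nat => enat that vanish off the primes.\<close>
definition steinitz :: "(nat \<Rightarrow> enat) set" where
  "steinitz = {a. \<forall>n. \<not> prime n \<longrightarrow> a n = 0}"

definition sigma_pp :: "complex \<Rightarrow> nat \<Rightarrow> enat \<Rightarrow> complex" where
  "sigma_pp c p a = (case a of
      enat k \<Rightarrow> (\<Sum>i\<le>k. (of_nat (p ^ i)) powr c)
    | \<infinity> \<Rightarrow> 1 / (1 - (of_nat p) powr c))"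

definition sigma_steinitz :: "complex \<Rightarrow> (nat \<Rightarrow> enat) \<Rightarrow> complex" where
  "sigma_steinitz c a = (\<Prod>n. (if prime n then sigma_pp c n (a n) else 1))"

end

theory Submission
  imports Defs
begin

(* Write q = p powr c for a prime p. For every exponent alpha in N or infinity,
   sigma_c(p^alpha) = (1 - x) / (1 - q) with x = q^(alpha+1), read as x = 0 for alpha = infinity.
   So on Steinitz numbers sigma_c factors through the coordinates a |-> (x_p)_p, which range over
   the product T of the sets {0, q, q^2, ...}. Since |q| < 1 each of these is compact, hence T is
   compact by Tychonoff; and |(1 - x)/(1 - q) - 1| <= 4 p^(Re c) is summable, so by the Weierstrass
   M-test the infinite product is continuous on T. Thus sigma_c(S) is compact, hence closed, and it
   contains sigma_c(N). Conversely, truncating a Steinitz number to the primes below N with all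
   exponents capped at N yields natural numbers whose coordinates converge in T, so by continuity
   sigma_c(S) lies in the closure of sigma_c(N). *)

lemma continuous_on_prodinf:
  fixes f :: "nat \<Rightarrow> 'a::topological_space \<Rightarrow> 'b::{real_normed_field,banach}"
  assumes cont: "\<And>n. continuous_on A (f n)" and "compact A"
    and bound: "\<And>n x. x \<in> A \<Longrightarrow> norm (f n x - 1) \<le> M n" and "summable M"
    and nonzero: "\<And>n x. x \<in> A \<Longrightarrow> f n x \<noteq> 0"
  shows "continuous_on A (\<lambda>x. \<Prod>n. f n x)"
proof -
  have "uniformly_convergent_on A (\<lambda>N x. \<Prod>n<N. f n x)"
    by (intro uniformly_convergent_on_prod' Weierstrass_m_test' cont) (use assms in auto)
  then have lim: "uniform_limit A (\<lambda>N x. \<Prod>n<N. f n x) (\<lambda>x. lim (\<lambda>N. \<Prod>n<N. f n x)) sequentially"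
    by (simp add: uniformly_convergent_uniform_limit_iff)
  have "continuous_on A (\<lambda>x. lim (\<lambda>N. \<Prod>n<N. f n x))"
    by (rule uniform_limit_theorem[OF _ lim]) (auto intro!: always_eventually continuous_on_prod cont)
  moreover have "(\<Prod>n. f n x) = lim (\<lambda>N. \<Prod>n<N. f n x)" if "x \<in> A" for x
  proof (rule prodinf_eq_lim')
    have "summable (\<lambda>n. norm (f n x - 1))"
      using bound[OF that] by (intro summable_comparison_test'[OF \<open>summable M\<close>]) auto
    then show "convergent_prod (\<lambda>n. f n x)"
      by (intro abs_convergent_prod_imp_convergent_prod summable_imp_abs_convergent_prod)
  qed (use nonzero that in auto)
  ultimately show ?thesis
    using continuous_on_cong by force
qed

lemma powr_of_nat_mult:
  fixes c :: complex
  shows "(of_nat a * of_nat b) powr c = of_nat a powr c * of_nat b powr c"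
  by (simp add: powr_times_real)

lemma powr_of_nat_power:
  fixes c :: complex
  shows "(of_nat p ^ i) powr c = (of_nat p powr c) ^ i"
  by (induction i) (simp_all add: powr_of_nat_mult flip: of_nat_power)

lemma sigma_nat_one [simp]: "sigma_nat c (Suc 0) = 1"
  by (simp add: sigma_nat_def)

lemma sigma_nat_mult_coprime:
  fixes m k :: nat
  assumes "coprime m k" "m > 0" "k > 0"
  shows "sigma_nat c (m * k) = sigma_nat c m * sigma_nat c k"
proof -
  let ?g = "\<lambda>d::nat. (of_nat d :: complex) powr c"
  let ?A = "{d. d dvd m}" and ?B = "{d. d dvd k}"
  have inj: "inj_on (\<lambda>(a, b). a * b) (?A \<times> ?B)"
  proof (rule inj_onI, clarify)
    fix a b a' b' assume ab: "a dvd m" "b dvd k" "a' dvd m" "b' dvd k" "a * b = a' * b'"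
    have "coprime a b'" "coprime a' b"
      using coprime_divisors ab \<open>coprime m k\<close> by blast+
    then have "a dvd a'" "a' dvd a"
      using ab(5) by (metis coprime_dvd_mult_left_iff dvd_triv_left)+
    then have "a = a'"
      by (simp add: dvd_antisym)
    moreover have "a > 0"
      using ab(1) \<open>m > 0\<close> by (metis dvd_pos_nat)
    ultimately show "a = a' \<and> b = b'"
      using ab(5) by simp
  qed
  have "{d. d dvd m * k} = (\<lambda>(a, b). a * b) ` (?A \<times> ?B)"
    by (auto intro: mult_dvd_mono elim!: dvd_productE)
  then have "sigma_nat c (m * k) = sum ?g ((\<lambda>(a, b). a * b) ` (?A \<times> ?B))"
    by (simp add: sigma_nat_def)
  also have "\<dots> = (\<Sum>(a, b)\<in>?A \<times> ?B. ?g (a * b))"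
    by (subst sum.reindex[OF inj]) (simp add: case_prod_beta)
  also have "\<dots> = sum ?g ?A * sum ?g ?B"
    using assms by (simp add: powr_of_nat_mult sum_product sum.cartesian_product)
  finally show ?thesis
    unfolding sigma_nat_def .
qed

lemma sigma_nat_prime_power:
  assumes "prime p"
  shows "sigma_nat c (p ^ k) = sigma_pp c p (enat k)"
proof -
  have "{d. d dvd p ^ k} = (\<lambda>i. p ^ i) ` {..k}"
    using divides_primepow_nat[OF assms] by auto
  moreover have "inj_on (\<lambda>i. p ^ i) {..k}"
    using prime_gt_1_nat[OF assms] by (auto intro!: inj_onI simp: power_inject_exp)
  ultimately show ?thesis
    unfolding sigma_nat_def sigma_pp_def by (simp add: sum.reindex)
qed

lemma sigma_nat_prod_prime_powers:
  assumes "finite S" "S \<subseteq> {p. prime p}"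
  shows "sigma_nat c (\<Prod>p\<in>S. p ^ e p) = (\<Prod>p\<in>S. sigma_pp c p (enat (e p)))"
  using assms
proof (induction S rule: finite_induct)
  case (insert p S)
  then have "prime p" "\<forall>q\<in>S. prime q \<and> q \<noteq> p"
    by auto
  then have "coprime (p ^ e p) (\<Prod>q\<in>S. q ^ e q)"
    by (auto intro!: prod_coprime_right simp: primes_coprime)
  moreover have "(\<Prod>q\<in>S. q ^ e q) > 0"
    using \<open>\<forall>q\<in>S. prime q \<and> q \<noteq> p\<close> by (auto intro!: prod_pos simp: prime_gt_0_nat)
  ultimately show ?case
    using insert \<open>prime p\<close>
    by (simp add: sigma_nat_mult_coprime prime_gt_0_nat sigma_nat_prime_power)
qed simp

lemma sigma_pp_zero [simp]: "sigma_pp c p 0 = 1"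
  by (simp add: sigma_pp_def zero_enat_def)

lemma sigma_steinitz_finite_support:
  assumes "finite S" "S \<subseteq> {p. prime p}"
  shows "sigma_steinitz c (\<lambda>p. if p \<in> S then enat (e p) else 0) = sigma_nat c (\<Prod>p\<in>S. p ^ e p)"
  unfolding sigma_steinitz_def sigma_nat_prod_prime_powers[OF assms]
  using assms by (subst prodinf_finite[of S]) (auto intro!: prod.cong)

lemma sigma_nat_in_sigma_steinitz_image:
  assumes "n \<ge> 1"
  shows "sigma_nat c n \<in> sigma_steinitz c ` steinitz"
proof
  let ?a = "\<lambda>p. if p \<in> prime_factors n then enat (multiplicity p n) else 0"
  have "sigma_steinitz c ?a = sigma_nat c (\<Prod>p\<in>prime_factors n. p ^ multiplicity p n)"
    by (rule sigma_steinitz_finite_support) auto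
  then show "sigma_nat c n = sigma_steinitz c ?a"
    using assms prime_factorization_nat[of n] by simp
  show "?a \<in> steinitz"
    by (auto simp: steinitz_def)
qed

lemma sigma_steinitz_finite_in_sigma_nat_image:
  assumes "a \<in> steinitz" "finite {p. a p \<noteq> 0}" "\<infinity> \<notin> range a"
  shows "sigma_steinitz c a \<in> sigma_nat c ` {n. n \<ge> 1}"
proof
  let ?S = "{p. a p \<noteq> 0}"
  have primes: "?S \<subseteq> {p. prime p}"
    using assms(1) by (auto simp: steinitz_def)
  have "a = (\<lambda>p. if p \<in> ?S then enat (the_enat (a p)) else 0)"
    using assms(3) by (auto intro!: ext) (metis enat.exhaust rangeI the_enat.simps)
  then show "sigma_steinitz c a = sigma_nat c (\<Prod>p\<in>?S. p ^ the_enat (a p))"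
    by (metis sigma_steinitz_finite_support[OF assms(2) primes])
  show "(\<Prod>p\<in>?S. p ^ the_enat (a p)) \<in> {n. n \<ge> 1}"
    using primes by (auto simp: Suc_le_eq prime_gt_0_nat intro!: prod_pos)
qed

lemma tendsto_coordinatewise_then_product:
  fixes f :: "'a \<Rightarrow> 'i \<Rightarrow> 'b::topological_space"
  assumes "\<And>i. ((\<lambda>x. f x i) \<longlongrightarrow> l i) F"
  shows "(f \<longlongrightarrow> l) F"
proof -
  have "limitin (product_topology (\<lambda>i. euclidean) UNIV) f l F"
    using assms by (simp add: limitin_componentwise)
  then show ?thesis
    by (simp add: euclidean_product_topology)
qed

definition geo_ratio :: "complex \<Rightarrow> nat \<Rightarrow> complex" where
  "geo_ratio c p = of_nat p powr c"

definition geo_tail :: "complex \<Rightarrow> nat \<Rightarrow> enat \<Rightarrow> complex" where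
  "geo_tail c p a = (case a of enat k \<Rightarrow> geo_ratio c p ^ Suc k | \<infinity> \<Rightarrow> 0)"

lemma norm_geo_ratio: "norm (geo_ratio c p) = real p powr Re c"
  by (simp add: geo_ratio_def norm_powr_real_powr)

lemma norm_geo_ratio_less_one:
  assumes "Re c < 0" "p \<ge> 2"
  shows "norm (geo_ratio c p) < 1"
  using assms by (simp add: norm_geo_ratio powr_less_one)

lemma norm_geo_ratio_le_half:
  assumes "Re c \<le> -1" "p \<ge> 2"
  shows "norm (geo_ratio c p) \<le> 1 / 2"
proof -
  have "real p powr Re c \<le> real p powr -1"
    using assms by (intro powr_mono) auto
  also have "\<dots> \<le> 1 / 2"
    using assms(2) by (simp add: powr_minus_divide field_simps)
  finally show ?thesis
    by (simp add: norm_geo_ratio)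
qed

lemma norm_geo_tail_le:
  assumes "norm (geo_ratio c p) \<le> 1"
  shows "norm (geo_tail c p a) \<le> norm (geo_ratio c p)"
proof (cases a)
  case (enat k)
  have "norm (geo_ratio c p) * norm (geo_ratio c p) ^ k \<le> norm (geo_ratio c p) * 1"
    using assms by (intro mult_left_mono power_le_one) auto
  then show ?thesis
    using enat by (simp add: geo_tail_def norm_mult norm_power)
qed (simp add: geo_tail_def)

lemma sigma_pp_eq_geo_tail:
  assumes "geo_ratio c p \<noteq> 1"
  shows "sigma_pp c p a = (1 - geo_tail c p a) / (1 - geo_ratio c p)"
proof (cases a)
  case (enat k)
  have "sigma_pp c p a = (\<Sum>i<Suc k. geo_ratio c p ^ i)"
    unfolding enat sigma_pp_def geo_ratio_def by (simp add: powr_of_nat_power lessThan_Suc_atMost)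
  also have "\<dots> = (1 - geo_tail c p a) / (1 - geo_ratio c p)"
    using assms enat by (subst sum_gp_strict) (simp add: geo_tail_def)
  finally show ?thesis .
qed (simp add: sigma_pp_def geo_tail_def geo_ratio_def)

lemma range_geo_tail: "range (geo_tail c p) = insert 0 (range (\<lambda>k. geo_ratio c p ^ Suc k))"
proof -
  have "UNIV = insert \<infinity> (range enat)"
    by (auto intro: enat.exhaust)
  then show ?thesis
    by (metis (no_types, lifting) geo_tail_def enat.simps image_cong image_image image_insert)
qed

lemma compact_range_geo_tail:
  assumes "Re c < 0" "p \<ge> 2"
  shows "compact (range (geo_tail c p))"
proof -
  have "(\<lambda>k. geo_ratio c p ^ k) \<longlonglongrightarrow> 0"
    using norm_geo_ratio_less_one[OF assms] by (rule LIMSEQ_power_zero)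
  then show ?thesis
    unfolding range_geo_tail by (intro compact_sequence_with_limit LIMSEQ_Suc)
qed

definition tail_factor :: "complex \<Rightarrow> nat \<Rightarrow> complex \<Rightarrow> complex" where
  "tail_factor c p y = (if prime p then (1 - y) / (1 - geo_ratio c p) else 1)"

definition tail_space :: "complex \<Rightarrow> (nat \<Rightarrow> complex) set" where
  "tail_space c = (\<Pi>\<^sub>E p\<in>UNIV. if prime p then range (geo_tail c p) else {0})"

definition tail_coords :: "complex \<Rightarrow> (nat \<Rightarrow> enat) \<Rightarrow> nat \<Rightarrow> complex" where
  "tail_coords c a p = (if prime p then geo_tail c p (a p) else 0)"

definition tail_product :: "complex \<Rightarrow> (nat \<Rightarrow> complex) \<Rightarrow> complex" where
  "tail_product c x = (\<Prod>p. tail_factor c p (x p))"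

lemma mem_tail_space_iff:
  "x \<in> tail_space c \<longleftrightarrow> (\<forall>p. if prime p then x p \<in> range (geo_tail c p) else x p = 0)"
  by (simp add: tail_space_def PiE_iff)

lemma tail_coords_in_tail_space: "tail_coords c a \<in> tail_space c"
  by (simp add: tail_coords_def mem_tail_space_iff)

lemma sigma_steinitz_eq_tail_product:
  assumes "Re c < 0"
  shows "sigma_steinitz c a = tail_product c (tail_coords c a)"
proof -
  have "geo_ratio c p \<noteq> 1" if "prime p" for p
    using norm_geo_ratio_less_one[OF assms prime_ge_2_nat[OF that]] by auto
  then show ?thesis
    unfolding sigma_steinitz_def tail_product_def tail_coords_def tail_factor_def
    by (intro arg_cong[where f = prodinf] ext) (simp add: sigma_pp_eq_geo_tail)
qed

lemma tail_coords_image_steinitz: "tail_coords c ` steinitz = tail_space c"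
proof
  show "tail_coords c ` steinitz \<subseteq> tail_space c"
    using tail_coords_in_tail_space by blast
  show "tail_space c \<subseteq> tail_coords c ` steinitz"
  proof
    fix x assume x: "x \<in> tail_space c"
    define a where "a p = (if prime p then (SOME k. x p = geo_tail c p k) else 0)" for p
    have "x p = tail_coords c a p" for p
    proof (cases "prime p")
      case True
      then have "x p \<in> range (geo_tail c p)"
        using x by (metis mem_tail_space_iff)
      then have "\<exists>k. x p = geo_tail c p k"
        by auto
      from someI_ex[OF this] show ?thesis
        using True by (simp add: a_def tail_coords_def)
    qed (use x in \<open>metis mem_tail_space_iff tail_coords_def\<close>)
    moreover have "a \<in> steinitz"
      by (simp add: a_def steinitz_def)
    ultimately show "x \<in> tail_coords c ` steinitz"
      by blast
  qed
qed

lemma sigma_steinitz_image_eq_tail_product_image: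
  assumes "Re c < 0"
  shows "sigma_steinitz c ` steinitz = tail_product c ` tail_space c"
  unfolding sigma_steinitz_eq_tail_product[OF assms] tail_coords_image_steinitz[symmetric]
  by (simp add: image_image)

lemma compact_tail_space:
  assumes "Re c < 0"
  shows "compact (tail_space c)"
proof -
  have "compactin (product_topology (\<lambda>p. euclidean) UNIV) (tail_space c)"
    unfolding tail_space_def
    by (subst compactin_PiE) (simp add: compact_range_geo_tail[OF assms] prime_ge_2_nat)
  then show ?thesis
    by (simp add: euclidean_product_topology)
qed

lemma tail_factor_bounds:
  assumes "Re c \<le> -1" "x \<in> tail_space c"
  shows "norm (tail_factor c p (x p) - 1) \<le> 4 * real p powr Re c"
    and "tail_factor c p (x p) \<noteq> 0"
proof -
  consider "\<not> prime p" | a where "prime p" "x p = geo_tail c p a"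
    using assms(2) by (metis mem_tail_space_iff rangeE)
  then have "norm (tail_factor c p (x p) - 1) \<le> 4 * real p powr Re c \<and> tail_factor c p (x p) \<noteq> 0"
  proof cases
    case 2
    let ?q = "geo_ratio c p"
    have q: "norm ?q \<le> 1 / 2"
      using norm_geo_ratio_le_half[OF assms(1) prime_ge_2_nat] 2 by simp
    then have y: "norm (x p) \<le> norm ?q"
      using 2 norm_geo_tail_le[of c p] by simp
    have "1 / 2 \<le> norm (1 - ?q)"
      using q norm_triangle_ineq2[of 1 ?q] by simp
    moreover have "norm (?q - x p) \<le> 2 * norm ?q"
      using y norm_triangle_ineq4[of ?q "x p"] by simp
    ultimately have "norm (?q - x p) / norm (1 - ?q) \<le> 2 * norm ?q / (1 / 2)"
      by (intro frac_le) auto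
    moreover have "tail_factor c p (x p) - 1 = (?q - x p) / (1 - ?q)"
    proof -
      have "1 - ?q \<noteq> 0"
        using q by auto
      then show ?thesis
        using 2 by (simp add: tail_factor_def field_simps)
    qed
    moreover have "x p \<noteq> 1"
      using q y by auto
    ultimately show ?thesis
      using 2 q by (auto simp: norm_divide norm_geo_ratio tail_factor_def)
  qed (simp add: tail_factor_def)
  then show "norm (tail_factor c p (x p) - 1) \<le> 4 * real p powr Re c"
    and "tail_factor c p (x p) \<noteq> 0"
    by auto
qed

lemma continuous_on_tail_product:
  assumes "Re c < -1"
  shows "continuous_on (tail_space c) (tail_product c)"
  unfolding tail_product_def
proof (rule continuous_on_prodinf)
  show "continuous_on (tail_space c) (\<lambda>x. tail_factor c p (x p))" for p
    using norm_geo_ratio_less_one[of c p] assms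
    by (cases "prime p")
       (auto simp: tail_factor_def prime_ge_2_nat intro!: continuous_intros
             intro: continuous_on_subset[OF continuous_on_product_coordinates])
  show "summable (\<lambda>p. 4 * real p powr Re c)"
    using assms by (simp add: summable_real_powr_iff)
qed (use assms compact_tail_space tail_factor_bounds in auto)

definition steinitz_trunc :: "nat \<Rightarrow> (nat \<Rightarrow> enat) \<Rightarrow> nat \<Rightarrow> enat" where
  "steinitz_trunc N a p = (if p < N then min (a p) (enat N) else 0)"

lemma sigma_steinitz_trunc_in_sigma_nat_image:
  assumes "a \<in> steinitz"
  shows "sigma_steinitz c (steinitz_trunc N a) \<in> sigma_nat c ` {n. n \<ge> 1}"
proof (rule sigma_steinitz_finite_in_sigma_nat_image)
  show "steinitz_trunc N a \<in> steinitz"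
    using assms by (simp add: steinitz_def steinitz_trunc_def)
  show "finite {p. steinitz_trunc N a p \<noteq> 0}"
    by (rule finite_subset[of _ "{..<N}"]) (auto simp: steinitz_trunc_def)
  show "\<infinity> \<notin> range (steinitz_trunc N a)"
    by (auto simp: steinitz_trunc_def min_def split: if_splits)
qed

lemma tendsto_tail_coords_steinitz_trunc:
  assumes "Re c < 0"
  shows "(\<lambda>N. tail_coords c (steinitz_trunc N a)) \<longlonglongrightarrow> tail_coords c a"
proof (rule tendsto_coordinatewise_then_product)
  fix p
  show "(\<lambda>N. tail_coords c (steinitz_trunc N a) p) \<longlonglongrightarrow> tail_coords c a p"
  proof (cases "prime p")
    case True
    have lim: "(\<lambda>N. geo_tail c p (min (a p) (enat N))) \<longlonglongrightarrow> geo_tail c p (a p)"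
    proof (cases "a p")
      case (enat k)
      have "\<forall>\<^sub>F N in sequentially. geo_tail c p (min (a p) (enat N)) = geo_tail c p (a p)"
        using eventually_ge_at_top[of k] by eventually_elim (simp add: enat)
      then show ?thesis
        by (rule tendsto_eventually)
    next
      case infinity
      have "(\<lambda>N. geo_ratio c p ^ Suc N) \<longlonglongrightarrow> 0"
        using norm_geo_ratio_less_one[OF assms prime_ge_2_nat[OF True]]
        by (intro LIMSEQ_Suc LIMSEQ_power_zero)
      then show ?thesis
        using infinity by (simp add: geo_tail_def)
    qed
    have "\<forall>\<^sub>F N in sequentially.
        geo_tail c p (min (a p) (enat N)) = tail_coords c (steinitz_trunc N a) p"
      using eventually_gt_at_top[of p]
      by eventually_elim (simp add: steinitz_trunc_def tail_coords_def True)
    from Lim_transform_eventually[OF lim this] show ?thesis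
      using True by (simp add: tail_coords_def)
  qed (simp add: tail_coords_def)
qed

lemma tendsto_sigma_steinitz_trunc:
  assumes "Re c < -1"
  shows "(\<lambda>N. sigma_steinitz c (steinitz_trunc N a)) \<longlonglongrightarrow> sigma_steinitz c a"
proof -
  have "(\<lambda>N. tail_product c (tail_coords c (steinitz_trunc N a))) \<longlonglongrightarrow> tail_product c (tail_coords c a)"
    using assms by (intro continuous_on_tendsto_compose[OF continuous_on_tail_product]
        tendsto_tail_coords_steinitz_trunc always_eventually) (auto simp: tail_coords_in_tail_space)
  then show ?thesis
    using assms by (simp add: sigma_steinitz_eq_tail_product)
qed

theorem mainTheorem4:
  fixes c :: complex
  assumes "Re c < -1"
  shows "closure (sigma_nat c ` {n. n \<ge> 1}) = sigma_steinitz c ` steinitz"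
proof
  have "compact (sigma_steinitz c ` steinitz)"
    using assms by (simp add: sigma_steinitz_image_eq_tail_product_image
        compact_continuous_image continuous_on_tail_product compact_tail_space)
  then show "closure (sigma_nat c ` {n. n \<ge> 1}) \<subseteq> sigma_steinitz c ` steinitz"
    by (intro closure_minimal compact_imp_closed) (auto intro: sigma_nat_in_sigma_steinitz_image)
  show "sigma_steinitz c ` steinitz \<subseteq> closure (sigma_nat c ` {n. n \<ge> 1})"
  proof
    fix z assume "z \<in> sigma_steinitz c ` steinitz"
    then obtain a where "a \<in> steinitz" "z = sigma_steinitz c a"
      by auto
    then show "z \<in> closure (sigma_nat c ` {n. n \<ge> 1})"
      unfolding closure_sequential
      using tendsto_sigma_steinitz_trunc[OF assms] sigma_steinitz_trunc_in_sigma_nat_image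
      by (intro exI[of _ "\<lambda>N. sigma_steinitz c (steinitz_trunc N a)"]) auto
  qed
qed

end
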